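(* Let $a,b,c,k$ be nonnegative integers with $a+b+c\le k$, and let $\overleftrightarrow{G}$ be a finite directed ordered graph such that the largest right oriented ordered matching contained in $\overleftrightarrow{G}$ as a subgraph has size at most $a$, the largest left oriented ordered matching contained in it has size at most $b$, and the largest directed ordered matching contained in it has size at most $c$. Then $\chi(\overleftrightarrow{G})\le 2(a+b+c)+1$.
   Context: A directed ordered graph is a finite ordered graph (undirected simple graph with a linear order on its vertices) in which each edge $\{u,v\}$ is replaced by either one arc ($(u,v)$ or $(v,u)$) or both arcs. The right oriented ordered matching $M^R_t$ has vertices $a_1<b_1<\dots<a_t<b_t$ and arcs $(a_i,b_i)$; the left oriented ordered matching $M^L_t$ has the same vertices and arcs $(b_i,a_i)$; the directed ordered matching $M^D_t$ has the same vertices and both arcs $(a_i,b_i),(b_i,a_i)$ for each $i$. A directed ordered graph contains one of these as a subgraph if there is an injective order-preserving map of its vertices into $\overleftrightarrow{G}$ sending arcs to arcs. $\chi(\overleftrightarrow{G})$ denotes the minimum $n$ such that there is a map $f$ from the vertices of $\overleftrightarrow{G}$ to those of $\overleftrightarrow{K}_n$ (the complete ordered graph on $n$ vertices with all edges oriented both ways) with $f(u)\le f(v)$ whenever $u\le v$ and $(f(u),f(v))$ an arc whenever $(u,v)$ is an arc. *)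

theory Defs
  imports Main
begin

text \<open>Every edge of the underlying
  simple graph carries one or both arcs, so any loop-free arc set arises this way.\<close>
definition dir_ordered_graph :: "'a::linorder set \<Rightarrow> ('a \<times> 'a) set \<Rightarrow> bool" where
  "dir_ordered_graph V A \<longleftrightarrow> finite V \<and> A \<subseteq> V \<times> V \<and> (\<forall>v. (v, v) \<notin> A)"

text \<open>Containment of M^R_t, M^L_t, M^D_t: an order-preserving injection g of the vertices
  a_1 < b_1 < ... < a_t < b_t (indexed 0..2t-1, a_i = 2i, b_i = 2i+1) into V sending arcs to arcs.\<close>
definition contains_right_matching :: "'a::linorder set \<Rightarrow> ('a \<times> 'a) set \<Rightarrow> nat \<Rightarrow> bool" where
  "contains_right_matching V A t \<longleftrightarrow> (\<exists>g::nat \<Rightarrow> 'a. strict_mono_on {..<2*t} g \<and> g ` {..<2*t} \<subseteq> V \<and>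
     (\<forall>i<t. (g (2*i), g (2*i+1)) \<in> A))"

definition contains_left_matching :: "'a::linorder set \<Rightarrow> ('a \<times> 'a) set \<Rightarrow> nat \<Rightarrow> bool" where
  "contains_left_matching V A t \<longleftrightarrow> (\<exists>g::nat \<Rightarrow> 'a. strict_mono_on {..<2*t} g \<and> g ` {..<2*t} \<subseteq> V \<and>
     (\<forall>i<t. (g (2*i+1), g (2*i)) \<in> A))"

definition contains_directed_matching :: "'a::linorder set \<Rightarrow> ('a \<times> 'a) set \<Rightarrow> nat \<Rightarrow> bool" where
  "contains_directed_matching V A t \<longleftrightarrow> (\<exists>g::nat \<Rightarrow> 'a. strict_mono_on {..<2*t} g \<and> g ` {..<2*t} \<subseteq> V \<and>
     (\<forall>i<t. (g (2*i), g (2*i+1)) \<in> A \<and> (g (2*i+1), g (2*i)) \<in> A))"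

text \<open>Homomorphism into the complete ordered graph on vertices 0 < 1 < ... < m-1 with all
  edges oriented both ways (arcs: all (i,j) with i \<noteq> j).\<close>
definition hom_to_complete :: "'a::linorder set \<Rightarrow> ('a \<times> 'a) set \<Rightarrow> nat \<Rightarrow> ('a \<Rightarrow> nat) \<Rightarrow> bool" where
  "hom_to_complete V A m f \<longleftrightarrow> (\<forall>v\<in>V. f v < m) \<and> (\<forall>u\<in>V. \<forall>v\<in>V. u \<le> v \<longrightarrow> f u \<le> f v) \<and>
     (\<forall>(u, v)\<in>A. f u \<noteq> f v)"

definition ochi :: "'a::linorder set \<Rightarrow> ('a \<times> 'a) set \<Rightarrow> nat" where
  "ochi V A = (LEAST m. \<exists>f. hom_to_complete V A m f)"

end

theory Submission
  imports Defs
begin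

text \<open>Let \<open>x\<close> be the leftmost vertex having a neighbour \<open>y < x\<close>. The vertices left of \<open>x\<close>
  are pairwise non-adjacent, so they share colour 0; \<open>x\<close> alone gets colour 1, and the part of
  the graph right of \<open>x\<close> is coloured recursively with the colours from 2 on. The edge \<open>yx\<close>
  lies entirely to the left of that part, so it extends the right, left or directed matching
  found there, according to its orientation. Every round thus costs two colours and enlarges
  one of the three matchings by one edge.\<close>

definition contains_matching :: "'a::linorder set \<Rightarrow> ('a \<Rightarrow> 'a \<Rightarrow> bool) \<Rightarrow> nat \<Rightarrow> bool" where
  "contains_matching V R t \<longleftrightarrow> (\<exists>g::nat \<Rightarrow> 'a. strict_mono_on {..<2*t} g \<and> g ` {..<2*t} \<subseteq> V \<and>
     (\<forall>i<t. R (g (2*i)) (g (2*i+1))))"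

lemma contains_right_matching_iff:
  "contains_right_matching V A t \<longleftrightarrow> contains_matching V (\<lambda>u v. (u, v) \<in> A) t"
  unfolding contains_right_matching_def contains_matching_def by simp

lemma contains_left_matching_iff:
  "contains_left_matching V A t \<longleftrightarrow> contains_matching V (\<lambda>u v. (v, u) \<in> A) t"
  unfolding contains_left_matching_def contains_matching_def by simp

lemma contains_directed_matching_iff:
  "contains_directed_matching V A t \<longleftrightarrow> contains_matching V (\<lambda>u v. (u, v) \<in> A \<and> (v, u) \<in> A) t"
  unfolding contains_directed_matching_def contains_matching_def by simp

lemma contains_matching_0: "contains_matching V R 0"
  unfolding contains_matching_def by (auto simp: strict_mono_on_def)

lemma contains_matching_mono: "contains_matching W R t \<Longrightarrow> W \<subseteq> V \<Longrightarrow> contains_matching V R t"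
  unfolding contains_matching_def by blast

lemma contains_matching_Suc:
  assumes g: "contains_matching {w \<in> V. x < w} R t"
    and "y \<in> V" "x \<in> V" "y < x" "R y x"
  shows "contains_matching V R (Suc t)"
proof -
  obtain g where mono: "strict_mono_on {..<2*t} g" and range: "g ` {..<2*t} \<subseteq> {w \<in> V. x < w}"
    and edges: "\<forall>i<t. R (g (2*i)) (g (2*i+1))"
    using g unfolding contains_matching_def by blast
  define h where "h i = (if i = 0 then y else if i = 1 then x else g (i - 2))" for i
  have right_of_x: "x < g i" "g i \<in> V" if "i < 2*t" for i
    using range that by auto
  have "h i < h j" if "i < j" "j < 2 * Suc t" for i j
  proof (cases "i < 2")
    case True
    then show ?thesis
      using that \<open>y < x\<close> right_of_x[of "j - 2"] by (auto simp: h_def intro: order.strict_trans)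
  next
    case False
    then show ?thesis
      using that strict_mono_onD[OF mono, of "i - 2" "j - 2"] by (simp add: h_def)
  qed
  then have "strict_mono_on {..<2 * Suc t} h"
    by (intro strict_mono_onI) auto
  moreover have "h ` {..<2 * Suc t} \<subseteq> V"
    using assms right_of_x by (auto simp: h_def)
  moreover have "R (h (2*i)) (h (2*i+1))" if "i < Suc t" for i
    using that edges \<open>R y x\<close> by (cases i) (auto simp: h_def)
  ultimately show ?thesis
    unfolding contains_matching_def by blast
qed

lemma matchings_extend_by_edge:
  fixes x :: "'a::linorder" and V :: "'a set"
  defines "U \<equiv> {w \<in> V. x < w}"
  assumes right: "contains_matching U (\<lambda>u v. (u, v) \<in> A) p"
    and left: "contains_matching U (\<lambda>u v. (v, u) \<in> A) q"
    and directed: "contains_matching U (\<lambda>u v. (u, v) \<in> A \<and> (v, u) \<in> A) s"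
    and "y \<in> V" "x \<in> V" "y < x" "(y, x) \<in> A \<or> (x, y) \<in> A"
  obtains p' q' s' where "p' + q' + s' = Suc (p + q + s)"
    "contains_matching V (\<lambda>u v. (u, v) \<in> A) p'" "contains_matching V (\<lambda>u v. (v, u) \<in> A) q'"
    "contains_matching V (\<lambda>u v. (u, v) \<in> A \<and> (v, u) \<in> A) s'"
proof -
  have "U \<subseteq> V"
    unfolding U_def by blast
  note extend = contains_matching_Suc[OF _ \<open>y \<in> V\<close> \<open>x \<in> V\<close> \<open>y < x\<close>, folded U_def]
  note keep = contains_matching_mono[OF _ \<open>U \<subseteq> V\<close>]
  consider "(y, x) \<in> A \<and> (x, y) \<in> A" | "(y, x) \<in> A \<and> (x, y) \<notin> A" | "(x, y) \<in> A \<and> (y, x) \<notin> A"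
    using \<open>(y, x) \<in> A \<or> (x, y) \<in> A\<close> by blast
  then show ?thesis
  proof cases
    case 1
    then show ?thesis
      using that[of p q "Suc s"] extend[OF directed] keep[OF right] keep[OF left] by simp
  next
    case 2
    then show ?thesis
      using that[of "Suc p" q s] extend[OF right] keep[OF left] keep[OF directed] by simp
  next
    case 3
    then show ?thesis
      using that[of p "Suc q" s] extend[OF left] keep[OF right] keep[OF directed] by simp
  qed
qed

lemma hom_to_complete_extend:
  fixes x :: "'a::linorder" and V :: "'a set" and f :: "'a \<Rightarrow> nat"
  defines "U \<equiv> {w \<in> V. x < w}" and "g \<equiv> \<lambda>w. if w < x then 0 else if w = x then 1 else f w + 2"
  assumes "x \<in> V" and loop_free: "\<forall>v. (v, v) \<notin> A"
    and left_independent: "\<forall>u\<in>V. \<forall>v\<in>V. u < x \<longrightarrow> v < x \<longrightarrow> (u, v) \<notin> A"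
    and f: "hom_to_complete U (A \<inter> U \<times> U) m f"
  shows "hom_to_complete V (A \<inter> V \<times> V) (m + 2) g"
proof -
  have f_U: "\<forall>v\<in>U. f v < m" "\<forall>u\<in>U. \<forall>v\<in>U. u \<le> v \<longrightarrow> f u \<le> f v"
    "\<forall>u\<in>U. \<forall>v\<in>U. (u, v) \<in> A \<longrightarrow> f u \<noteq> f v"
    using f unfolding hom_to_complete_def by auto
  have U_iff: "w \<in> U \<longleftrightarrow> w \<in> V \<and> x < w" for w
    unfolding U_def by simp
  have "g u \<noteq> g v" if uv: "(u, v) \<in> A" "u \<in> V" "v \<in> V" for u v
  proof (cases "x < u \<and> x < v")
    case True
    then show ?thesis
      using uv f_U(3) by (auto simp: g_def U_iff)
  next
    case False
    moreover have "u \<noteq> v" "\<not> (u < x \<and> v < x)"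
      using uv loop_free left_independent by auto
    ultimately show ?thesis
      by (auto simp: g_def)
  qed
  moreover have "g u \<le> g v" if "u \<le> v" "u \<in> V" "v \<in> V" for u v
    using that f_U(2) by (auto simp: g_def U_iff)
  moreover have "g v < m + 2" if "v \<in> V" for v
    using that f_U(1) by (auto simp: g_def U_iff)
  ultimately show ?thesis
    unfolding hom_to_complete_def by auto
qed

lemma obtain_leftmost_edge:
  fixes V :: "'a::linorder set"
  assumes "finite V" and loop_free: "\<forall>v. (v, v) \<notin> A" and "A \<inter> V \<times> V \<noteq> {}"
  obtains x y where "x \<in> V" "y \<in> V" "y < x" "(y, x) \<in> A \<or> (x, y) \<in> A"
    and "\<forall>u\<in>V. \<forall>v\<in>V. u < x \<longrightarrow> v < x \<longrightarrow> (u, v) \<notin> A"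
proof -
  define C where "C = {w \<in> V. \<exists>u\<in>V. u < w \<and> ((u, w) \<in> A \<or> (w, u) \<in> A)}"
  have "C \<noteq> {}"
    using assms(3) loop_free unfolding C_def by (auto, metis linorder_neqE)
  moreover have "finite C"
    using \<open>finite V\<close> unfolding C_def by simp
  ultimately have "Min C \<in> C" and least: "\<And>w. w \<in> C \<Longrightarrow> Min C \<le> w"
    by auto
  moreover have "\<forall>u\<in>V. \<forall>v\<in>V. u < Min C \<longrightarrow> v < Min C \<longrightarrow> (u, v) \<notin> A"
    using least loop_free unfolding C_def by (metis (mono_tags, lifting) leD mem_Collect_eq neq_iff)
  ultimately show ?thesis
    using that unfolding C_def by blast
qed

lemma hom_to_complete_with_matchings:
  fixes V :: "'a::linorder set"
  assumes "finite V" and loop_free: "\<forall>v. (v, v) \<notin> A"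
  shows "\<exists>f p q s. hom_to_complete V (A \<inter> V \<times> V) (2 * (p + q + s) + 1) f \<and>
    contains_matching V (\<lambda>u v. (u, v) \<in> A) p \<and> contains_matching V (\<lambda>u v. (v, u) \<in> A) q \<and>
    contains_matching V (\<lambda>u v. (u, v) \<in> A \<and> (v, u) \<in> A) s"
  using \<open>finite V\<close>
proof (induction V rule: finite_psubset_induct)
  case (psubset V)
  show ?case
  proof (cases "A \<inter> V \<times> V = {}")
    case True
    then have "hom_to_complete V (A \<inter> V \<times> V) (2 * (0 + 0 + 0) + 1) (\<lambda>_. 0)"
      unfolding hom_to_complete_def by simp
    then show ?thesis
      using contains_matching_0 by blast
  next
    case False
    then obtain x y where "x \<in> V" and y: "y \<in> V" "y < x" "(y, x) \<in> A \<or> (x, y) \<in> A"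
      and left_independent: "\<forall>u\<in>V. \<forall>v\<in>V. u < x \<longrightarrow> v < x \<longrightarrow> (u, v) \<notin> A"
      using obtain_leftmost_edge[OF psubset.hyps loop_free] by blast
    define U where "U = {w \<in> V. x < w}"
    have "U \<subset> V"
      using \<open>x \<in> V\<close> unfolding U_def by auto
    obtain f p q s where
      f: "hom_to_complete U (A \<inter> U \<times> U) (2 * (p + q + s) + 1) f" and
      right: "contains_matching U (\<lambda>u v. (u, v) \<in> A) p" and
      left: "contains_matching U (\<lambda>u v. (v, u) \<in> A) q" and
      directed: "contains_matching U (\<lambda>u v. (u, v) \<in> A \<and> (v, u) \<in> A) s"
      using psubset.IH[OF \<open>U \<subset> V\<close>] by blast
    obtain g where hom: "hom_to_complete V (A \<inter> V \<times> V) (2 * (p + q + s) + 1 + 2) g"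
      using hom_to_complete_extend[OF \<open>x \<in> V\<close> loop_free left_independent] f
      unfolding U_def by blast
    obtain p' q' s' where sum: "p' + q' + s' = Suc (p + q + s)"
      and "contains_matching V (\<lambda>u v. (u, v) \<in> A) p'" "contains_matching V (\<lambda>u v. (v, u) \<in> A) q'"
        "contains_matching V (\<lambda>u v. (u, v) \<in> A \<and> (v, u) \<in> A) s'"
      using matchings_extend_by_edge[OF right[unfolded U_def] left[unfolded U_def]
          directed[unfolded U_def] y(1) \<open>x \<in> V\<close> y(2-3)]
      by blast
    moreover have "hom_to_complete V (A \<inter> V \<times> V) (2 * (p' + q' + s') + 1) g"
      using hom unfolding sum by simp
    ultimately show ?thesis
      by blast
  qed
qed

lemma ochi_le: "hom_to_complete V A m f \<Longrightarrow> ochi V A \<le> m"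
  unfolding ochi_def by (rule Least_le) blast

theorem corollary2:
  fixes V :: "'a::linorder set" and A :: "('a \<times> 'a) set" and a b c k :: nat
  assumes "a + b + c \<le> k"
    and "dir_ordered_graph V A"
    and "\<forall>t. contains_right_matching V A t \<longrightarrow> t \<le> a"
    and "\<forall>t. contains_left_matching V A t \<longrightarrow> t \<le> b"
    and "\<forall>t. contains_directed_matching V A t \<longrightarrow> t \<le> c"
  shows "ochi V A \<le> 2 * (a + b + c) + 1"
proof -
  have "finite V" and arcs: "A \<inter> V \<times> V = A" and loop_free: "\<forall>v. (v, v) \<notin> A"
    using assms(2) unfolding dir_ordered_graph_def by auto
  obtain f p q s where hom: "hom_to_complete V (A \<inter> V \<times> V) (2 * (p + q + s) + 1) f"
    and "contains_matching V (\<lambda>u v. (u, v) \<in> A) p" "contains_matching V (\<lambda>u v. (v, u) \<in> A) q"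
      "contains_matching V (\<lambda>u v. (u, v) \<in> A \<and> (v, u) \<in> A) s"
    using hom_to_complete_with_matchings[OF \<open>finite V\<close> loop_free] by blast
  then have "p \<le> a" "q \<le> b" "s \<le> c"
    using assms(3-5) unfolding contains_right_matching_iff contains_left_matching_iff
      contains_directed_matching_iff by simp_all
  moreover have "ochi V A \<le> 2 * (p + q + s) + 1"
    using ochi_le hom unfolding arcs .
  ultimately show ?thesis
    by (meson add_le_mono add_le_mono1 le_trans mult_le_mono2)
qed

end
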